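(* Let $d,n,m\in\mathbb{N}$, $(a_{ij})\in\mathbb{R}^{n\times m}$ with no row identically zero, and $\alpha_1,\ldots,\alpha_n\in\mathbb{R}$. If $$\sum_{i=1}^n \alpha_i h\Big(\sum_{j=1}^m a_{ij}Z_j\Big)\le 0$$ holds for all independent $\mathbb{R}^d$-valued continuous random variables $Z_1,\ldots,Z_m$ (for which all entropies involved are finite), then $\sum_{i=1}^n\alpha_i=0$.
   Context: $h(X)=\int f_X\log\frac1{f_X}$ is the differential entropy of an $\mathbb{R}^d$-valued random vector with Lebesgue density $f_X$; "continuous" means absolutely continuous w.r.t. Lebesgue measure. *)

theory Defs
  imports "HOL-Probability.Probability"
begin

text \<open>Differential entropy (natural logarithm) of a random vector X on M:
  the library entropy with base e relative to Lebesgue measure, i.e.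
  minus the KL divergence of the law of X w.r.t. lborel, which equals
  the integral of f log (1/f) for a density f.\<close>
definition diff_entropy :: "'w measure \<Rightarrow> ('w \<Rightarrow> 'a::euclidean_space) \<Rightarrow> real" where
  "diff_entropy M X = prob_space.entropy M (exp 1) lborel X"

definition continuous_rv :: "'w measure \<Rightarrow> ('w \<Rightarrow> 'a::euclidean_space) \<Rightarrow> bool" where
  "continuous_rv M X \<longleftrightarrow> X \<in> borel_measurable M \<and>
     absolutely_continuous lborel (distr M lborel X)"

definition finite_diff_entropy :: "'w measure \<Rightarrow> ('w \<Rightarrow> 'a::euclidean_space) \<Rightarrow> bool" where
  "finite_diff_entropy M X \<longleftrightarrow>
     (\<exists>f::'a \<Rightarrow> real. (\<forall>x. 0 \<le> f x) \<and> distributed M lborel X (\<lambda>x. ennreal (f x)) \<and>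
        integrable lborel (\<lambda>x. f x * ln (f x)))"

end

theory Submission
  imports Defs
begin

text \<open>Take \<open>Z\<^sub>j = t U\<^sub>j\<close> with \<open>U\<^sub>1, \<dots>, U\<^sub>m\<close> independent and uniform on the unit cube.
  If \<open>a\<^sub>i\<^sub>k \<noteq> 0\<close>, integrating out \<open>U\<^sub>k\<close> shows that \<open>\<Sum>\<^sub>j a\<^sub>i\<^sub>j Z\<^sub>j\<close> has a density bounded by
  \<open>\<bar>a\<^sub>i\<^sub>k t\<bar>\<^sup>-\<^sup>d\<close>; it is also supported in a cube of side \<open>2 t \<Sum>\<^sub>j \<bar>a\<^sub>i\<^sub>j\<bar>\<close>. Hence its entropy is
  \<open>d ln t + O(1)\<close> uniformly in \<open>t\<close>, and the hypothesis gives \<open>d ln t \<Sum>\<^sub>i \<alpha>\<^sub>i \<le> C\<close> for all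
  \<open>t > 0\<close>, which forces \<open>\<Sum>\<^sub>i \<alpha>\<^sub>i = 0\<close>.\<close>

section \<open>Laws dominated by Lebesgue measure\<close>

lemma absolutely_continuous_if_emeasure_vimage_le:
  fixes X :: "'w \<Rightarrow> 'a::euclidean_space"
  assumes X[measurable]: "X \<in> borel_measurable M" and K: "0 < K"
    and le: "\<And>A. A \<in> sets borel \<Longrightarrow> ennreal K * emeasure M (X -` A \<inter> space M) \<le> emeasure lborel A"
  shows "absolutely_continuous lborel (distr M lborel X)"
  unfolding absolutely_continuous_def
proof
  fix A :: "'a set" assume A: "A \<in> null_sets lborel"
  then have "ennreal K * emeasure M (X -` A \<inter> space M) \<le> 0"
    using le[of A] null_setsD1[OF A] by auto
  then have "emeasure M (X -` A \<inter> space M) = 0"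
    using K by (auto simp: ennreal_zero_less_mult_iff)
  then show "A \<in> null_sets (distr M lborel X)"
    using A by (auto simp: null_sets_def emeasure_distr)
qed

lemma AE_le_if_emeasure_density_le:
  fixes g :: "'a::euclidean_space \<Rightarrow> ennreal"
  assumes g[measurable]: "g \<in> borel_measurable lborel"
    and le: "\<And>A. A \<in> sets borel \<Longrightarrow> emeasure (density lborel g) A \<le> ennreal c * emeasure lborel A"
  shows "AE x in lborel. g x \<le> ennreal c"
proof -
  have "AE x in lborel. x \<notin> {x. ennreal c < g x} \<inter> cball 0 (real k)" for k
  proof -
    define B where "B = {x. ennreal c < g x} \<inter> cball 0 (real k)"
    have B[measurable]: "B \<in> sets borel" unfolding B_def by measurable
    have "emeasure lborel B \<le> emeasure lborel (cball (0::'a) (real k))"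
      by (intro emeasure_mono) (auto simp: B_def)
    also have "\<dots> < \<infinity>" by (rule emeasure_lborel_cball_finite)
    finally have B_finite: "emeasure lborel B < \<infinity>" .
    have c_B: "(\<integral>\<^sup>+x. ennreal c * indicator B x \<partial>lborel) = ennreal c * emeasure lborel B"
      by (simp add: nn_integral_cmult_indicator)
    have "AE x in lborel. g x * indicator B x \<le> ennreal c * indicator B x"
    proof (rule ccontr)
      assume "\<not> ?thesis"
      then have "(\<integral>\<^sup>+x. ennreal c * indicator B x \<partial>lborel) < (\<integral>\<^sup>+x. g x * indicator B x \<partial>lborel)"
        using c_B B_finite
        by (intro nn_integral_less) (auto simp: B_def indicator_def less_imp_le ennreal_mult_eq_top_iff)
      also have "\<dots> = emeasure (density lborel g) B"
        by (simp add: emeasure_density)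
      also have "\<dots> \<le> ennreal c * emeasure lborel B"
        by (rule le) simp
      finally show False using c_B by simp
    qed
    then show ?thesis
      by eventually_elim (auto simp: B_def indicator_def split: if_splits)
  qed
  then have "AE x in lborel. \<forall>k. x \<notin> {x. ennreal c < g x} \<inter> cball 0 (real k)"
    by (simp only: AE_all_countable) blast
  then show ?thesis
  proof eventually_elim
    case (elim x)
    obtain k where "norm x \<le> real k" using real_arch_simple by blast
    with elim[rule_format, of k] show ?case by (auto simp: not_less)
  qed
qed

lemma AE_density_eq_0_outside:
  fixes X :: "'w \<Rightarrow> 'a::euclidean_space"
  assumes X[measurable]: "X \<in> borel_measurable M" and g[measurable]: "g \<in> borel_measurable lborel"
    and g_law: "density lborel g = distr M lborel X"
    and S[measurable]: "S \<in> sets borel" and in_S: "AE \<omega> in M. X \<omega> \<in> S"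
  shows "AE x in lborel. x \<notin> S \<longrightarrow> g x = 0"
proof -
  have "(\<integral>\<^sup>+x. g x * indicator (- S) x \<partial>lborel) = emeasure (distr M lborel X) (- S)"
    by (simp flip: g_law add: emeasure_density)
  also have "\<dots> = emeasure M {\<omega> \<in> space M. X \<omega> \<notin> S}"
    by (simp add: emeasure_distr vimage_def Int_def conj_commute)
  also have "\<dots> = 0"
    using in_S by (subst (asm) AE_iff_measurable[OF _ refl]) auto
  finally have "AE x in lborel. g x * indicator (- S) x = 0"
    by (subst (asm) nn_integral_0_iff_AE) auto
  then show ?thesis by eventually_elim (auto simp: indicator_def)
qed

text \<open>The Radon--Nikodym derivative is bounded by \<open>1/K\<close> and vanishes outside \<open>S\<close> only
  almost everywhere, so it is modified on a null set.\<close>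

lemma bounded_density_if_emeasure_vimage_le:
  fixes X :: "'w \<Rightarrow> 'a::euclidean_space"
  assumes X[measurable]: "X \<in> borel_measurable M" and K: "0 < K"
    and le: "\<And>A. A \<in> sets borel \<Longrightarrow> ennreal K * emeasure M (X -` A \<inter> space M) \<le> emeasure lborel A"
    and S[measurable]: "S \<in> sets borel" and in_S: "AE \<omega> in M. X \<omega> \<in> S"
  obtains f where "f \<in> borel_measurable borel" "\<And>x. 0 \<le> f x" "\<And>x. f x \<le> 1 / K"
    "\<And>x. f x \<noteq> 0 \<Longrightarrow> x \<in> S" "distributed M lborel X (\<lambda>x. ennreal (f x))"
proof -
  obtain g where g[measurable]: "g \<in> borel_measurable lborel"
    and g_law: "density lborel g = distr M lborel X"
    using sigma_finite_measure.Radon_Nikodym[OF sigma_finite_lborel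
        absolutely_continuous_if_emeasure_vimage_le[OF X K le]]
    by auto
  have g_emeasure: "emeasure (density lborel g) A = emeasure M (X -` A \<inter> space M)"
    if "A \<in> sets borel" for A
    using that by (simp add: g_law emeasure_distr)
  have g_le: "AE x in lborel. g x \<le> ennreal (1 / K)"
  proof (rule AE_le_if_emeasure_density_le[OF g])
    fix A :: "'a set" assume A: "A \<in> sets borel"
    have "ennreal (1 / K) * (ennreal K * emeasure M (X -` A \<inter> space M))
        \<le> ennreal (1 / K) * emeasure lborel A"
      using le[OF A] by (rule mult_left_mono) simp
    then show "emeasure (density lborel g) A \<le> ennreal (1 / K) * emeasure lborel A"
      using K A by (simp add: g_emeasure mult.assoc[symmetric] ennreal_mult[symmetric])
  qed
  have g_support: "AE x in lborel. x \<notin> S \<longrightarrow> g x = 0"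
    by (rule AE_density_eq_0_outside[OF X g g_law S in_S])
  define f where "f x = (if x \<in> S \<and> g x \<le> ennreal (1 / K) then enn2real (g x) else 0)" for x
  have f[measurable]: "f \<in> borel_measurable borel" unfolding f_def by measurable
  have "AE x in lborel. g x = ennreal (f x)"
    using g_le g_support by eventually_elim (auto simp: f_def ennreal_enn2real_if top_unique)
  then have "density lborel g = density lborel (\<lambda>x. ennreal (f x))"
    by (intro density_cong) auto
  then have "distributed M lborel X (\<lambda>x. ennreal (f x))"
    unfolding distributed_def using g_law by auto
  with f show ?thesis
    using K by (intro that[of f]) (auto simp: f_def enn2real_leI split: if_splits)
qed

section \<open>Entropy of a bounded, boundedly supported density\<close>

lemma abs_mult_ln_le:
  fixes y C :: real
  assumes "0 \<le> y" "y \<le> C"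
  shows "\<bar>y * ln y\<bar> \<le> 1 + C * C"
proof (cases "y \<le> 1")
  case True
  have "- (y * ln y) \<le> 1 - y"
    using assms ln_le_minus_one[of "1 / y"] by (cases "y = 0") (auto simp: ln_div field_simps)
  moreover have "y * ln y \<le> 0"
    using True assms by (cases "y = 0") (auto simp: mult_nonneg_nonpos)
  ultimately show ?thesis using assms(1) zero_le_square[of C] by (subst abs_of_nonpos) linarith+
next
  case False
  then have "0 \<le> ln y" "ln y \<le> y" using ln_le_minus_one[of y] by auto
  then have "y * ln y \<le> C * C"
    using assms by (meson mult_mono order.trans less_imp_le)
  then show ?thesis using \<open>0 \<le> ln y\<close> assms by simp
qed

lemma integrable_mult_ln_if_bounded_support:
  fixes f :: "'a::euclidean_space \<Rightarrow> real"
  assumes f[measurable]: "f \<in> borel_measurable borel"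
    and nonneg: "\<And>x. 0 \<le> f x" and le: "\<And>x. f x \<le> C"
    and support: "\<And>x. f x \<noteq> 0 \<Longrightarrow> x \<in> S"
    and S[measurable]: "S \<in> sets borel" and S_finite: "emeasure lborel S < \<infinity>"
  shows "integrable lborel (\<lambda>x. f x * ln (f x))"
proof (rule Bochner_Integration.integrable_bound)
  show "integrable lborel (\<lambda>x. (1 + C * C) * indicator S x)"
    using S_finite by (simp add: integrable_indicator_iff)
  have "norm (f x * ln (f x)) \<le> norm ((1 + C * C) * indicator S x)" for x
    using abs_mult_ln_le[OF nonneg le, of x] support[of x]
    by (cases "x \<in> S") (auto simp: indicator_def)
  then show "AE x in lborel. norm (f x * ln (f x)) \<le> norm ((1 + C * C) * indicator S x)"
    by simp
qed simp

lemma diff_entropy_eq_integral: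
  fixes X :: "'w \<Rightarrow> 'a::euclidean_space"
  assumes "prob_space M" and "distributed M lborel X (\<lambda>x. ennreal (f x))" and "\<And>x. 0 \<le> f x"
  shows "diff_entropy M X = - (\<integral>x. f x * ln (f x) \<partial>lborel)"
proof -
  interpret information_space M "exp 1"
    using assms(1) by (simp add: information_space_def information_space_axioms_def)
  show ?thesis
    unfolding diff_entropy_def using entropy_distr[OF assms(2)] assms(3) by (simp add: log_def)
qed

lemma neg_ln_le_diff_entropy_if_density_le:
  fixes X :: "'w \<Rightarrow> 'a::euclidean_space"
  assumes M: "prob_space M" and D: "distributed M lborel X (\<lambda>x. ennreal (f x))"
    and nonneg: "\<And>x. 0 \<le> f x" and le: "\<And>x. f x \<le> C"
    and int: "integrable lborel (\<lambda>x. f x * ln (f x))"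
  shows "- ln C \<le> diff_entropy M X"
proof -
  interpret prob_space M by fact
  have f_int: "integrable lborel f" and f_integral: "(\<integral>x. f x \<partial>lborel) = 1"
    using distributed_integrable[OF D, of "\<lambda>_. 1"] distributed_integral[OF D, of "\<lambda>_. 1"] nonneg
    by (simp_all add: prob_space)
  have C_pos: "0 < C"
  proof (rule ccontr)
    assume "\<not> 0 < C"
    then have "f = (\<lambda>_. 0)" using nonneg le by (meson antisym order.trans not_less ext)
    then show False using f_integral by simp
  qed
  have "f x * ln (f x) \<le> ln C * f x" for x
  proof (cases "f x = 0")
    case False
    then have "ln (f x) \<le> ln C" using nonneg[of x] le[of x] C_pos by simp
    then show ?thesis by (metis mult.commute mult_left_mono nonneg)
  qed simp
  then have "(\<integral>x. f x * ln (f x) \<partial>lborel) \<le> (\<integral>x. ln C * f x \<partial>lborel)"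
    using int f_int by (intro integral_mono) auto
  also have "\<dots> = ln C" using f_integral by simp
  finally show ?thesis using diff_entropy_eq_integral[OF M D nonneg] by simp
qed

lemma diff_entropy_le_ln_measure_support:
  fixes X :: "'w \<Rightarrow> 'a::euclidean_space"
  assumes M: "prob_space M" and D: "distributed M lborel X (\<lambda>x. ennreal (f x))"
    and nonneg: "\<And>x. 0 \<le> f x" and int: "integrable lborel (\<lambda>x. f x * ln (f x))"
    and support: "\<And>x. f x \<noteq> 0 \<Longrightarrow> x \<in> S"
    and S[measurable]: "S \<in> sets borel" and S_finite: "emeasure lborel S < \<infinity>"
  shows "diff_entropy M X \<le> ln (measure lborel S)"
proof -
  interpret information_space M "exp 1"
    using M by (simp add: information_space_def information_space_axioms_def)
  have [measurable]: "f \<in> borel_measurable lborel"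
    using distributed_real_measurable[OF _ D] nonneg by blast
  let ?Z = "{x \<in> space lborel. f x \<noteq> 0}"
  have Z_sub: "?Z \<subseteq> S" using support by auto
  then have "emeasure lborel ?Z \<le> emeasure lborel S" using S by (intro emeasure_mono) auto
  then have Z_finite: "emeasure lborel ?Z \<noteq> \<infinity>" using S_finite by (auto simp: top_unique)
  have "diff_entropy M X \<le> ln (measure lborel ?Z)"
    using entropy_le[OF D] nonneg Z_finite int by (simp add: diff_entropy_def log_def)
  also have "\<dots> \<le> ln (measure lborel S)"
  proof (rule ln_mono)
    have "{x \<in> space lborel. ennreal (f x) \<noteq> 0} = ?Z"
      using nonneg by (auto simp: antisym_conv)
    then show "0 < measure lborel ?Z"
      using distributed_imp_emeasure_nonzero[OF D] Z_finite
      by (auto simp: measure_def enn2real_positive_iff top.not_eq_extremum zero_less_iff_neq_zero)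
    show "measure lborel ?Z \<le> measure lborel S"
      using Z_sub S_finite by (intro measure_mono_fmeasurable) (auto simp: fmeasurable_def)
  qed
  finally show ?thesis .
qed

section \<open>Linear combinations of independent uniform vectors\<close>

definition uniform_cube :: "'a::euclidean_space measure" where
  "uniform_cube = density lborel (indicator (cbox 0 One))"

lemma sets_uniform_cube[simp, measurable_cong]: "sets uniform_cube = sets borel"
  by (simp add: uniform_cube_def)

lemma space_uniform_cube[simp]: "space uniform_cube = UNIV"
  by (simp add: uniform_cube_def)

lemma prob_space_uniform_cube: "prob_space uniform_cube"
proof
  show "emeasure uniform_cube (space uniform_cube) = 1"
    by (simp add: uniform_cube_def emeasure_density nn_integral_indicator emeasure_lborel_cbox_eq)
qed

lemma prob_space_PiM_uniform_cube: "prob_space (PiM I (\<lambda>_. uniform_cube))"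
  by (rule prob_space_PiM) (rule prob_space_uniform_cube)

lemma measurable_component_uniform_cube:
  assumes "j \<in> I"
  shows "(\<lambda>\<omega>. \<omega> j) \<in> borel_measurable (PiM I (\<lambda>_. uniform_cube :: 'a::euclidean_space measure))"
proof -
  have "(\<lambda>\<omega>. \<omega> j) \<in> measurable (PiM I (\<lambda>_. uniform_cube :: 'a measure)) uniform_cube"
    using assms by (rule measurable_component_singleton)
  then show ?thesis by (simp cong: measurable_cong_sets)
qed

lemma AE_uniform_cube_in_cube: "AE y in uniform_cube. y \<in> cbox 0 One"
  unfolding uniform_cube_def by (subst AE_density) (auto simp: indicator_def)

lemma nn_integral_lborel_affine:
  fixes g :: "'a::euclidean_space \<Rightarrow> ennreal"
  assumes c: "c \<noteq> 0" and g[measurable]: "g \<in> borel_measurable borel"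
  shows "ennreal (\<bar>c\<bar> ^ DIM('a)) * (\<integral>\<^sup>+y. g (t + c *\<^sub>R y) \<partial>lborel) = (\<integral>\<^sup>+x. g x \<partial>lborel)"
proof -
  have "(\<integral>\<^sup>+x. g x \<partial>lborel) =
      (\<integral>\<^sup>+x. g x \<partial>density (distr lborel borel (\<lambda>x. t + c *\<^sub>R x)) (\<lambda>_. ennreal (\<bar>c\<bar> ^ DIM('a))))"
    using lborel_affine[OF c, of t] by simp
  also have "\<dots> = (\<integral>\<^sup>+y. ennreal (\<bar>c\<bar> ^ DIM('a)) * g (t + c *\<^sub>R y) \<partial>lborel)"
    by (simp add: nn_integral_density nn_integral_distr)
  also have "\<dots> = ennreal (\<bar>c\<bar> ^ DIM('a)) * (\<integral>\<^sup>+y. g (t + c *\<^sub>R y) \<partial>lborel)"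
    by (simp add: nn_integral_cmult)
  finally show ?thesis ..
qed

lemma emeasure_translate_scaled_uniform_cube_le:
  fixes A :: "'a::euclidean_space set"
  assumes c: "c \<noteq> 0" and A[measurable]: "A \<in> sets borel"
  shows "ennreal (\<bar>c\<bar> ^ DIM('a)) * (\<integral>\<^sup>+y. indicator A (t + c *\<^sub>R y) \<partial>uniform_cube)
    \<le> emeasure lborel A"
proof -
  have "(\<integral>\<^sup>+y. indicator A (t + c *\<^sub>R y) \<partial>uniform_cube) =
      (\<integral>\<^sup>+y. indicator (cbox 0 One) y * indicator A (t + c *\<^sub>R y) \<partial>lborel)"
    unfolding uniform_cube_def by (subst nn_integral_density) auto
  also have "\<dots> \<le> (\<integral>\<^sup>+y. indicator A (t + c *\<^sub>R y) \<partial>lborel)"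
    by (intro nn_integral_mono) (auto simp: indicator_def)
  finally have "ennreal (\<bar>c\<bar> ^ DIM('a)) * (\<integral>\<^sup>+y. indicator A (t + c *\<^sub>R y) \<partial>uniform_cube)
      \<le> ennreal (\<bar>c\<bar> ^ DIM('a)) * (\<integral>\<^sup>+y. indicator A (t + c *\<^sub>R y) \<partial>lborel)"
    by (rule mult_left_mono) simp
  also have "\<dots> = emeasure lborel A"
    using nn_integral_lborel_affine[OF c, of "indicator A"] by simp
  finally show ?thesis .
qed

text \<open>Conditioning on all coordinates but \<open>\<omega> k\<close> reduces the bound to a single translated and
  scaled uniform cube.\<close>

lemma emeasure_linear_combination_uniform_le:
  fixes c :: "nat \<Rightarrow> real" and A :: "'a::euclidean_space set"
  assumes k: "k < m" and c: "c k \<noteq> 0" and A[measurable]: "A \<in> sets borel"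
  shows "ennreal (\<bar>c k\<bar> ^ DIM('a)) * emeasure (PiM {..<m} (\<lambda>_. uniform_cube))
    ((\<lambda>\<omega>. \<Sum>j<m. c j *\<^sub>R \<omega> j) -` A \<inter> space (PiM {..<m} (\<lambda>_. uniform_cube)))
    \<le> emeasure lborel A"
proof -
  let ?P = "PiM {..<m} (\<lambda>_. uniform_cube :: 'a measure)"
  interpret product_sigma_finite "\<lambda>_::nat. uniform_cube :: 'a measure"
    by (simp add: product_sigma_finite_def prob_space_imp_sigma_finite prob_space_uniform_cube)
  define I where "I = {..<m} - {k}"
  interpret PI: prob_space "PiM I (\<lambda>_. uniform_cube :: 'a measure)"
    by (rule prob_space_PiM_uniform_cube)
  have insert_I: "insert k I = {..<m}" and "k \<notin> I" "finite I"
    using k by (auto simp: I_def)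
  define X where "X = (\<lambda>\<omega>::nat \<Rightarrow> 'a. \<Sum>j<m. c j *\<^sub>R \<omega> j)"
  define s where "s = (\<lambda>\<omega>::nat \<Rightarrow> 'a. \<Sum>j\<in>I. c j *\<^sub>R \<omega> j)"
  have X_upd: "X (x(k := y)) = s x + c k *\<^sub>R y" for x y
  proof -
    have "X (x(k := y)) = c k *\<^sub>R y + (\<Sum>j\<in>I. c j *\<^sub>R (x(k := y)) j)"
      unfolding X_def insert_I[symmetric] using \<open>finite I\<close> \<open>k \<notin> I\<close> by simp
    also have "(\<Sum>j\<in>I. c j *\<^sub>R (x(k := y)) j) = s x"
      unfolding s_def using \<open>k \<notin> I\<close> by (intro sum.cong) auto
    finally show ?thesis by (metis add.commute)
  qed
  have X[measurable]: "X \<in> borel_measurable ?P" unfolding X_def by measurable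
  have "emeasure ?P (X -` A \<inter> space ?P) = (\<integral>\<^sup>+\<omega>. indicator (X -` A \<inter> space ?P) \<omega> \<partial>?P)"
    by (rule nn_integral_indicator[symmetric]) (rule measurable_sets[OF X A])
  also have "\<dots> = (\<integral>\<^sup>+\<omega>. indicator A (X \<omega>) \<partial>?P)"
    by (rule nn_integral_cong) (auto simp: indicator_def)
  also have "\<dots> = (\<integral>\<^sup>+x. (\<integral>\<^sup>+y. indicator A (X (x(k := y))) \<partial>uniform_cube) \<partial>PiM I (\<lambda>_. uniform_cube))"
    unfolding insert_I[symmetric]
    by (rule product_nn_integral_insert[OF \<open>finite I\<close> \<open>k \<notin> I\<close>]) (simp add: insert_I)
  also have "\<dots> = (\<integral>\<^sup>+x. (\<integral>\<^sup>+y. indicator A (s x + c k *\<^sub>R y) \<partial>uniform_cube) \<partial>PiM I (\<lambda>_. uniform_cube))"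
    by (simp only: X_upd)
  finally have "ennreal (\<bar>c k\<bar> ^ DIM('a)) * emeasure ?P (X -` A \<inter> space ?P) =
      (\<integral>\<^sup>+x. ennreal (\<bar>c k\<bar> ^ DIM('a)) * (\<integral>\<^sup>+y. indicator A (s x + c k *\<^sub>R y) \<partial>uniform_cube)
        \<partial>PiM I (\<lambda>_. uniform_cube))"
    by (simp only:) (rule nn_integral_cmult[symmetric], unfold s_def, measurable)
  also have "\<dots> \<le> (\<integral>\<^sup>+x. emeasure lborel A \<partial>PiM I (\<lambda>_. uniform_cube :: 'a measure))"
    by (rule nn_integral_mono) (rule emeasure_translate_scaled_uniform_cube_le[OF c A])
  also have "\<dots> = emeasure lborel A"
    by (simp add: PI.emeasure_space_1)
  finally show ?thesis by (simp add: X_def)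
qed

lemma AE_linear_combination_uniform_in_cube:
  fixes c :: "nat \<Rightarrow> real" and m :: nat
  defines "R \<equiv> \<Sum>j<m. \<bar>c j\<bar>"
  shows "AE \<omega> in PiM {..<m} (\<lambda>_. uniform_cube :: 'a::euclidean_space measure).
    (\<Sum>j<m. c j *\<^sub>R \<omega> j) \<in> cbox (- (R *\<^sub>R One)) (R *\<^sub>R One)"
proof -
  have "AE \<omega> in PiM {..<m} (\<lambda>_. uniform_cube :: 'a measure). \<forall>j\<in>{..<m}. \<omega> j \<in> cbox 0 One"
    by (subst AE_ball_countable)
       (auto intro!: AE_PiM_component prob_space_uniform_cube AE_uniform_cube_in_cube)
  then show ?thesis
  proof eventually_elim
    case (elim \<omega>)
    have "- R \<le> (\<Sum>j<m. c j *\<^sub>R \<omega> j) \<bullet> b \<and> (\<Sum>j<m. c j *\<^sub>R \<omega> j) \<bullet> b \<le> R"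
      if b: "b \<in> Basis" for b
    proof -
      have "\<bar>(\<Sum>j<m. c j *\<^sub>R \<omega> j) \<bullet> b\<bar> \<le> (\<Sum>j<m. \<bar>c j * (\<omega> j \<bullet> b)\<bar>)"
        by (simp add: inner_sum_left sum_abs)
      also have "\<dots> \<le> R"
        unfolding R_def
      proof (rule sum_mono)
        fix j assume "j \<in> {..<m}"
        then have "0 \<le> \<omega> j \<bullet> b" "\<omega> j \<bullet> b \<le> 1" using elim b by (auto simp: mem_box)
        then show "\<bar>c j * (\<omega> j \<bullet> b)\<bar> \<le> \<bar>c j\<bar>" by (simp add: abs_mult mult_left_le)
      qed
      finally show ?thesis by arith
    qed
    then show ?case by (simp add: mem_box inner_minus_left)
  qed
qed

lemma diff_entropy_linear_combination_uniform_bounds: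
  fixes c :: "nat \<Rightarrow> real"
  assumes k: "k < m" and c: "c k \<noteq> 0"
  defines "P \<equiv> PiM {..<m} (\<lambda>_. uniform_cube :: 'a::euclidean_space measure)"
    and "X \<equiv> \<lambda>\<omega>. \<Sum>j<m. c j *\<^sub>R \<omega> j"
  shows "finite_diff_entropy P X"
    and "real DIM('a) * ln \<bar>c k\<bar> \<le> diff_entropy P X"
    and "diff_entropy P X \<le> real DIM('a) * ln (2 * (\<Sum>j<m. \<bar>c j\<bar>))"
proof -
  have P: "prob_space P" unfolding P_def by (rule prob_space_PiM_uniform_cube)
  have X[measurable]: "X \<in> borel_measurable P" unfolding X_def P_def by measurable
  define R where "R = (\<Sum>j<m. \<bar>c j\<bar>)"
  have "\<bar>c k\<bar> \<le> R" unfolding R_def using k by (intro member_le_sum) auto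
  then have R_pos: "0 < R" using c by simp
  define S where "S = cbox (- (R *\<^sub>R One)) (R *\<^sub>R (One::'a))"
  have S[measurable]: "S \<in> sets borel" by (simp add: S_def)
  have measure_S: "emeasure lborel S = ennreal ((2 * R) ^ DIM('a))"
    using R_pos by (simp add: S_def emeasure_lborel_cbox_eq inner_simps prod_constant)
  then have S_finite: "emeasure lborel S < \<infinity>" by simp
  define K where "K = \<bar>c k\<bar> ^ DIM('a)"
  have K_pos: "0 < K" using c by (simp add: K_def)
  have K_bound: "ennreal K * emeasure P (X -` A \<inter> space P) \<le> emeasure lborel A"
    if "A \<in> sets borel" for A
    using emeasure_linear_combination_uniform_le[of k m c, OF k c that] by (simp add: K_def P_def X_def)
  have in_S: "AE \<omega> in P. X \<omega> \<in> S"
    unfolding P_def X_def S_def R_def by (rule AE_linear_combination_uniform_in_cube)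
  obtain f where f[measurable]: "f \<in> borel_measurable borel" and f_nonneg: "\<And>x. 0 \<le> f x"
    and f_le: "\<And>x. f x \<le> 1 / K" and f_support: "\<And>x. f x \<noteq> 0 \<Longrightarrow> x \<in> S"
    and D: "distributed P lborel X (\<lambda>x. ennreal (f x))"
    using bounded_density_if_emeasure_vimage_le[OF X K_pos K_bound S in_S] by blast
  have int: "integrable lborel (\<lambda>x. f x * ln (f x))"
    by (rule integrable_mult_ln_if_bounded_support[OF f f_nonneg f_le f_support S S_finite])
  show "finite_diff_entropy P X"
    unfolding finite_diff_entropy_def using f_nonneg D int by blast
  show "real DIM('a) * ln \<bar>c k\<bar> \<le> diff_entropy P X"
    using neg_ln_le_diff_entropy_if_density_le[OF P D f_nonneg f_le int] c
    by (simp add: K_def ln_div ln_realpow)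
  show "diff_entropy P X \<le> real DIM('a) * ln (2 * (\<Sum>j<m. \<bar>c j\<bar>))"
    using diff_entropy_le_ln_measure_support[OF P D f_nonneg int f_support S S_finite]
      measure_S R_pos ln_realpow[of "2 * R" "DIM('a)"]
    by (simp add: measure_def R_def)
qed

lemma diff_entropy_scaled_linear_combination_uniform_bounds:
  fixes c :: "nat \<Rightarrow> real"
  assumes k: "k < m" and c: "c k \<noteq> 0" and t: "0 < t"
  defines "P \<equiv> PiM {..<m} (\<lambda>_. uniform_cube :: 'a::euclidean_space measure)"
    and "X \<equiv> \<lambda>\<omega>. \<Sum>j<m. c j *\<^sub>R (t *\<^sub>R \<omega> j)"
  shows "finite_diff_entropy P X"
    and "real DIM('a) * ln \<bar>c k\<bar> \<le> diff_entropy P X - real DIM('a) * ln t"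
    and "diff_entropy P X - real DIM('a) * ln t \<le> real DIM('a) * ln (2 * (\<Sum>j<m. \<bar>c j\<bar>))"
proof -
  have X_eq: "X = (\<lambda>\<omega>. \<Sum>j<m. (c j * t) *\<^sub>R \<omega> j)" by (simp add: X_def)
  have "0 < (\<Sum>j<m. \<bar>c j\<bar>)"
    using k c by (intro sum_pos2[of _ k]) auto
  then have "ln \<bar>c k * t\<bar> = ln \<bar>c k\<bar> + ln t"
    and "ln (2 * (\<Sum>j<m. \<bar>c j * t\<bar>)) = ln (2 * (\<Sum>j<m. \<bar>c j\<bar>)) + ln t"
    using c t by (simp_all add: abs_mult ln_mult sum_distrib_right[symmetric] mult.assoc)
  with diff_entropy_linear_combination_uniform_bounds[of k m "\<lambda>j. c j * t", where 'a='a] k c t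
  show "finite_diff_entropy P X"
    and "real DIM('a) * ln \<bar>c k\<bar> \<le> diff_entropy P X - real DIM('a) * ln t"
    and "diff_entropy P X - real DIM('a) * ln t \<le> real DIM('a) * ln (2 * (\<Sum>j<m. \<bar>c j\<bar>))"
    unfolding P_def X_eq by (simp_all add: algebra_simps)
qed

lemma continuous_rv_scaled_component_uniform:
  fixes j m :: nat
  assumes j: "j < m" and t: "t \<noteq> 0"
  shows "continuous_rv (PiM {..<m} (\<lambda>_. uniform_cube :: 'a::euclidean_space measure))
    (\<lambda>\<omega>. t *\<^sub>R \<omega> j)"
proof -
  let ?P = "PiM {..<m} (\<lambda>_. uniform_cube :: 'a measure)"
  define c where "c = (\<lambda>j'. if j' = j then t else 0)"
  have c_sum: "(\<Sum>j'<m. c j' *\<^sub>R \<omega> j') = t *\<^sub>R \<omega> j" for \<omega> :: "nat \<Rightarrow> 'a"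
  proof -
    have "(\<Sum>j'<m. c j' *\<^sub>R \<omega> j') = (\<Sum>j'<m. if j' = j then t *\<^sub>R \<omega> j' else 0)"
      by (intro sum.cong) (auto simp: c_def)
    also have "\<dots> = t *\<^sub>R \<omega> j" using j by (simp add: sum.delta)
    finally show ?thesis .
  qed
  have [measurable]: "(\<lambda>\<omega>. \<omega> j) \<in> borel_measurable ?P"
    using j by (intro measurable_component_uniform_cube) simp
  have Z: "(\<lambda>\<omega>. t *\<^sub>R \<omega> j) \<in> borel_measurable ?P" by measurable
  have "ennreal (\<bar>t\<bar> ^ DIM('a)) * emeasure ?P ((\<lambda>\<omega>. t *\<^sub>R \<omega> j) -` A \<inter> space ?P)
      \<le> emeasure lborel A" if "A \<in> sets borel" for A
    using emeasure_linear_combination_uniform_le[of j m c A] j t that unfolding c_sum by (simp add: c_def)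
  with Z have "absolutely_continuous lborel (distr ?P lborel (\<lambda>\<omega>. t *\<^sub>R \<omega> j))"
    using t by (intro absolutely_continuous_if_emeasure_vimage_le[of _ _ "\<bar>t\<bar> ^ DIM('a)"]) auto
  with Z show ?thesis unfolding continuous_rv_def ..
qed

lemma indep_vars_scaled_components_uniform:
  assumes m: "0 < m"
  shows "prob_space.indep_vars (PiM {..<m} (\<lambda>_. uniform_cube :: 'a::euclidean_space measure))
    (\<lambda>_. borel) (\<lambda>j \<omega>. t *\<^sub>R \<omega> j) {..<m}"
proof -
  let ?P = "PiM {..<m} (\<lambda>_. uniform_cube :: 'a measure)"
  interpret prob_space ?P by (rule prob_space_PiM_uniform_cube)
  have "indep_vars (\<lambda>_. borel) (\<lambda>j \<omega>. \<omega> j) {..<m}"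
  proof (subst indep_vars_iff_distr_eq_PiM')
    have "distr ?P (\<Pi>\<^sub>M i\<in>{..<m}. borel) (\<lambda>x. \<lambda>i\<in>{..<m}. x i) = distr ?P ?P (\<lambda>x. x)"
      by (intro distr_cong) (auto simp: space_PiM intro!: sets_PiM_cong)
    also have "\<dots> = (\<Pi>\<^sub>M i\<in>{..<m}. distr ?P borel (\<lambda>\<omega>. \<omega> i))"
    proof (simp, rule PiM_cong)
      fix i assume i: "i \<in> {..<m}"
      have "distr ?P borel (\<lambda>\<omega>. \<omega> i) = distr ?P uniform_cube (\<lambda>\<omega>. \<omega> i)"
        by (intro distr_cong) auto
      also have "\<dots> = uniform_cube" by (rule distr_PiM_component[OF prob_space_uniform_cube i])
      finally show "uniform_cube = distr ?P borel (\<lambda>\<omega>. \<omega> i)" ..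
    qed simp
    finally show "distr ?P (\<Pi>\<^sub>M i\<in>{..<m}. borel) (\<lambda>x. \<lambda>i\<in>{..<m}. x i) =
        (\<Pi>\<^sub>M i\<in>{..<m}. distr ?P borel (\<lambda>\<omega>. \<omega> i))" .
  qed (use m in auto)
  then show ?thesis
    by (rule indep_vars_compose2[where Y="\<lambda>_ x. t *\<^sub>R x"]) simp
qed

section \<open>The scaling argument\<close>

lemma sum_eq_0_if_nonpos_and_log_bounded:
  fixes h :: "real \<Rightarrow> nat \<Rightarrow> real" and \<alpha> L V :: "nat \<Rightarrow> real"
  assumes D: "0 < D"
    and nonpos: "\<And>t. 0 < t \<Longrightarrow> (\<Sum>i<n. \<alpha> i * h t i) \<le> 0"
    and bounds: "\<And>t i. 0 < t \<Longrightarrow> i < n \<Longrightarrow> L i \<le> h t i - D * ln t \<and> h t i - D * ln t \<le> V i"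
  shows "(\<Sum>i<n. \<alpha> i) = 0"
proof (rule ccontr)
  define S where "S = (\<Sum>i<n. \<alpha> i)"
  define B where "B = (\<Sum>i<n. \<bar>\<alpha> i\<bar> * (\<bar>L i\<bar> + \<bar>V i\<bar>))"
  assume "(\<Sum>i<n. \<alpha> i) \<noteq> 0"
  then have "S \<noteq> 0" by (simp add: S_def)
  have "D * ln t * S \<le> B" if t: "0 < t" for t
  proof -
    have "\<bar>\<alpha> i * (h t i - D * ln t)\<bar> \<le> \<bar>\<alpha> i\<bar> * (\<bar>L i\<bar> + \<bar>V i\<bar>)" if "i < n" for i
      using bounds[OF t that] by (auto simp: abs_mult intro!: mult_left_mono)
    then have "(\<Sum>i<n. \<bar>\<alpha> i * (h t i - D * ln t)\<bar>) \<le> B"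
      unfolding B_def by (intro sum_mono) simp
    then have "- (\<Sum>i<n. \<alpha> i * (h t i - D * ln t)) \<le> B"
      using sum_abs[of "\<lambda>i. \<alpha> i * (h t i - D * ln t)" "{..<n}"] by linarith
    moreover have "(\<Sum>i<n. \<alpha> i * h t i) = D * ln t * S + (\<Sum>i<n. \<alpha> i * (h t i - D * ln t))"
      by (simp add: S_def sum_distrib_left sum_subtractf algebra_simps)
    ultimately show ?thesis using nonpos[OF t] by linarith
  qed
  from this[of "exp ((B + 1) / (D * S))"] show False
    using D \<open>S \<noteq> 0\<close> by simp
qed

theorem mainTheorem3:
  fixes n m :: nat and a :: "nat \<Rightarrow> nat \<Rightarrow> real" and \<alpha> :: "nat \<Rightarrow> real"
  assumes rows: "\<forall>i<n. \<exists>j<m. a i j \<noteq> 0"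
    and ineq: "\<And>(M :: (nat \<Rightarrow> 'a::euclidean_space) measure) (Z :: nat \<Rightarrow> (nat \<Rightarrow> 'a) \<Rightarrow> 'a).
       prob_space M \<Longrightarrow>
       prob_space.indep_vars M (\<lambda>_. borel) Z {..<m} \<Longrightarrow>
       (\<forall>j<m. continuous_rv M (Z j)) \<Longrightarrow>
       (\<forall>i<n. finite_diff_entropy M (\<lambda>\<omega>. \<Sum>j<m. a i j *\<^sub>R Z j \<omega>)) \<Longrightarrow>
       (\<Sum>i<n. \<alpha> i * diff_entropy M (\<lambda>\<omega>. \<Sum>j<m. a i j *\<^sub>R Z j \<omega>)) \<le> 0"
  shows "(\<Sum>i<n. \<alpha> i) = 0"
proof (cases "n = 0")
  case False
  then have m: "0 < m" using rows by (metis gr0I less_nat_zero_code)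
  obtain k where k: "\<And>i. i < n \<Longrightarrow> k i < m \<and> a i (k i) \<noteq> 0" using rows by metis
  let ?P = "PiM {..<m} (\<lambda>_. uniform_cube :: 'a measure)"
  define h where "h t i = diff_entropy ?P (\<lambda>\<omega>. \<Sum>j<m. a i j *\<^sub>R (t *\<^sub>R \<omega> j))" for t i
  note row_bounds = diff_entropy_scaled_linear_combination_uniform_bounds[of "k _" m "a _", where 'a='a]
  show ?thesis
  proof (rule sum_eq_0_if_nonpos_and_log_bounded)
    show "(\<Sum>i<n. \<alpha> i * h t i) \<le> 0" if t: "0 < t" for t
      unfolding h_def
    proof (rule ineq[OF prob_space_PiM_uniform_cube indep_vars_scaled_components_uniform[OF m]])
      show "\<forall>j<m. continuous_rv ?P (\<lambda>\<omega>. t *\<^sub>R \<omega> j)"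
        using t by (auto intro: continuous_rv_scaled_component_uniform)
      show "\<forall>i<n. finite_diff_entropy ?P (\<lambda>\<omega>. \<Sum>j<m. a i j *\<^sub>R (t *\<^sub>R \<omega> j))"
        using row_bounds(1) k t by blast
    qed
    show "real DIM('a) * ln \<bar>a i (k i)\<bar> \<le> h t i - real DIM('a) * ln t
        \<and> h t i - real DIM('a) * ln t \<le> real DIM('a) * ln (2 * (\<Sum>j<m. \<bar>a i j\<bar>))"
      if "0 < t" "i < n" for t i
      using row_bounds(2,3) k that unfolding h_def by blast
  qed simp
qed simp

end
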